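(* The standard dual functor on $\mathrm{Herm}(\mathrm{sVect})$ maps $\mathrm{sHilb}\subseteq\mathrm{Herm}(\mathrm{sVect})$ into $\mathrm{sHilb}_{odd\text{-}neg}$, the full subcategory of super Hermitian vector spaces whose even part is positive definite and whose odd part is negative definite.
   Context: $\mathrm{sVect}$: finite-dimensional complex $\mathbb{Z}/2$-graded vector spaces with even linear maps, Koszul braiding, dual $V^*$ = graded space of linear functionals with $T^*(f)=f\circ T$. Anti-involution $dV=\overline{V}^*$ (identified with $\overline{V^*}$ via $\bar f(\bar v)=\overline{f(v)}$), monoidal structure $\chi(\bar f\otimes\bar g)(\bar v\otimes\bar w)=(-1)^{|g||v|}\overline{f(v)g(w)}$, $\eta_V(v)=\Phi_v$, $\Phi_v(f)=(-1)^{|f||v|}f(v)$. $\mathrm{Herm}(\mathrm{sVect})$: pairs $(V,\langle\cdot,\cdot\rangle)$ with nondegenerate sesquilinear form, $V_0\perp V_1$, $\langle v,w\rangle=(-1)^{|v||w|}\overline{\langle w,v\rangle}$; morphisms even linear maps. $\mathrm{sHilb}$: those with $\langle v,v\rangle>0$ for nonzero even $v$ and $\langle v,v\rangle/i>0$ for nonzero odd $v$; $\mathrm{sHilb}_{odd\text{-}neg}$: those with $\langle v,v\rangle>0$ for nonzero even $v$ and $\langle v,v\rangle/i<0$ for nonzero odd $v$. The standard dual functor sends $(V,h)$ (with $h\colon V\to dV$ the map corresponding to the form) to $V^*$ with the dual Hermitian pairing $V^*\xrightarrow{(h^* )^{-1}}(dV)^*\cong d(V^* )$, where the last isomorphism is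 the canonical uniqueness-of-duals isomorphism, and a morphism $T$ to $T^*$. *)

theory Defs
  imports "HOL-Analysis.Analysis"
begin

text \<open>
  A finite-dimensional complex super vector space is modelled by the
  underlying space complex^'n (every finite-dimensional complex vector space is
  isomorphic to one of these; 'n is an arbitrary finite index type) together with an
  arbitrary grading by two complementary subspaces V0 (even part) and V1 (odd part).
  Sesquilinear forms are linear in the first and antilinear in the second argument;
  the map h : V -> dV corresponding to a form is  h(v)(bar w) = B v w.
  Elements of dV = conj(V)^* are represented as antilinear functionals phi on V
  (phi w = value at bar w); elements of d(V^*) = conj(V^*)^* as antilinear functionals
  Theta on V^* (Theta f = value at bar f); elements of (dV)^* as linear functionals
  on dV.  All such representing functions are required to vanish outside their
  domain, so that they are uniquely determined.
\<close>

type_synonym 'n cvec = "complex ^ 'n"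

definition is_subsp :: "'a set \<Rightarrow> ('a \<Rightarrow> 'a \<Rightarrow> 'a) \<Rightarrow> (complex \<Rightarrow> 'a \<Rightarrow> 'a) \<Rightarrow> 'a \<Rightarrow> 'a set \<Rightarrow> bool" where
  "is_subsp S add sc z W \<longleftrightarrow> W \<subseteq> S \<and> z \<in> W \<and> (\<forall>x\<in>W. \<forall>y\<in>W. add x y \<in> W) \<and> (\<forall>c. \<forall>x\<in>W. sc c x \<in> W)"

definition super_herm ::
  "'a set \<Rightarrow> ('a \<Rightarrow> 'a \<Rightarrow> 'a) \<Rightarrow> (complex \<Rightarrow> 'a \<Rightarrow> 'a) \<Rightarrow> 'a \<Rightarrow> 'a set \<Rightarrow> 'a set \<Rightarrow> ('a \<Rightarrow> 'a \<Rightarrow> complex) \<Rightarrow> bool" where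
  "super_herm S add sc z V0 V1 B \<longleftrightarrow>
     is_subsp S add sc z V0 \<and> is_subsp S add sc z V1 \<and> V0 \<inter> V1 = {z} \<and>
     (\<forall>x\<in>S. \<exists>a\<in>V0. \<exists>b\<in>V1. x = add a b) \<and>
     (\<forall>x\<in>S. \<forall>y\<in>S. \<forall>w\<in>S. B (add x y) w = B x w + B y w \<and> B w (add x y) = B w x + B w y) \<and>
     (\<forall>c. \<forall>x\<in>S. \<forall>w\<in>S. B (sc c x) w = c * B x w \<and> B w (sc c x) = cnj c * B w x) \<and>
     (\<forall>x\<in>V0. \<forall>y\<in>V1. B x y = 0 \<and> B y x = 0) \<and>
     (\<forall>x\<in>V0. \<forall>y\<in>V0. B x y = cnj (B y x)) \<and>
     (\<forall>x\<in>V1. \<forall>y\<in>V1. B x y = - cnj (B y x)) \<and>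
     (\<forall>x\<in>S. (\<forall>y\<in>S. B x y = 0) \<longrightarrow> x = z)"

definition pos_real :: "complex \<Rightarrow> bool" where
  "pos_real c \<longleftrightarrow> c \<in> \<real> \<and> 0 < Re c"

definition neg_real :: "complex \<Rightarrow> bool" where
  "neg_real c \<longleftrightarrow> c \<in> \<real> \<and> Re c < 0"

definition sHilb_obj ::
  "'a set \<Rightarrow> ('a \<Rightarrow> 'a \<Rightarrow> 'a) \<Rightarrow> (complex \<Rightarrow> 'a \<Rightarrow> 'a) \<Rightarrow> 'a \<Rightarrow> 'a set \<Rightarrow> 'a set \<Rightarrow> ('a \<Rightarrow> 'a \<Rightarrow> complex) \<Rightarrow> bool" where
  "sHilb_obj S add sc z V0 V1 B \<longleftrightarrow> super_herm S add sc z V0 V1 B \<and>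
     (\<forall>v\<in>V0. v \<noteq> z \<longrightarrow> pos_real (B v v)) \<and>
     (\<forall>v\<in>V1. v \<noteq> z \<longrightarrow> pos_real (B v v / \<i>))"

definition sHilb_oddneg_obj ::
  "'a set \<Rightarrow> ('a \<Rightarrow> 'a \<Rightarrow> 'a) \<Rightarrow> (complex \<Rightarrow> 'a \<Rightarrow> 'a) \<Rightarrow> 'a \<Rightarrow> 'a set \<Rightarrow> 'a set \<Rightarrow> ('a \<Rightarrow> 'a \<Rightarrow> complex) \<Rightarrow> bool" where
  "sHilb_oddneg_obj S add sc z V0 V1 B \<longleftrightarrow> super_herm S add sc z V0 V1 B \<and>
     (\<forall>v\<in>V0. v \<noteq> z \<longrightarrow> pos_real (B v v)) \<and>
     (\<forall>v\<in>V1. v \<noteq> z \<longrightarrow> neg_real (B v v / \<i>))"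

definition sHilbV :: "'n::finite cvec set \<Rightarrow> 'n cvec set \<Rightarrow> ('n cvec \<Rightarrow> 'n cvec \<Rightarrow> complex) \<Rightarrow> bool" where
  "sHilbV V0 V1 B \<longleftrightarrow> sHilb_obj UNIV (+) (\<lambda>c x. c *s x) 0 V0 V1 B"

definition parproj :: "'n::finite cvec set \<Rightarrow> 'n cvec set \<Rightarrow> nat \<Rightarrow> 'n cvec \<Rightarrow> 'n cvec" where
  "parproj V0 V1 q v = (if q = 0 then (THE a. a \<in> V0 \<and> v - a \<in> V1) else (THE b. b \<in> V1 \<and> v - b \<in> V0))"

definition koszul :: "nat \<Rightarrow> nat \<Rightarrow> complex" where
  "koszul p q = (-1) ^ (p * q)"

definition clin :: "('n::finite cvec \<Rightarrow> complex) \<Rightarrow> bool" where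
  "clin f \<longleftrightarrow> (\<forall>x y. f (x + y) = f x + f y) \<and> (\<forall>c x. f (c *s x) = c * f x)"

definition antilin :: "('n::finite cvec \<Rightarrow> complex) \<Rightarrow> bool" where
  "antilin f \<longleftrightarrow> (\<forall>x y. f (x + y) = f x + f y) \<and> (\<forall>c x. f (c *s x) = cnj c * f x)"

definition fadd :: "('a \<Rightarrow> complex) \<Rightarrow> ('a \<Rightarrow> complex) \<Rightarrow> 'a \<Rightarrow> complex" where
  "fadd f g = (\<lambda>x. f x + g x)"

definition fsc :: "complex \<Rightarrow> ('a \<Rightarrow> complex) \<Rightarrow> 'a \<Rightarrow> complex" where
  "fsc c f = (\<lambda>x. c * f x)"

definition fzero :: "'a \<Rightarrow> complex" where
  "fzero = (\<lambda>_. 0)"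

definition dual_space :: "('n::finite cvec \<Rightarrow> complex) set" where
  "dual_space = {f. clin f}"

definition dual_even :: "'n::finite cvec set \<Rightarrow> 'n cvec set \<Rightarrow> ('n cvec \<Rightarrow> complex) set" where
  "dual_even V0 V1 = {f \<in> dual_space. \<forall>v\<in>V1. f v = 0}"

definition dual_odd :: "'n::finite cvec set \<Rightarrow> 'n cvec set \<Rightarrow> ('n cvec \<Rightarrow> complex) set" where
  "dual_odd V0 V1 = {f \<in> dual_space. \<forall>v\<in>V0. f v = 0}"

definition dV_space :: "('n::finite cvec \<Rightarrow> complex) set" where
  "dV_space = {phi. antilin phi}"

definition dual_dV :: "(('n::finite cvec \<Rightarrow> complex) \<Rightarrow> complex) set" where
  "dual_dV = {L. (\<forall>phi\<in>dV_space. \<forall>psi\<in>dV_space. L (fadd phi psi) = L phi + L psi) \<and>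
                 (\<forall>c. \<forall>phi\<in>dV_space. L (fsc c phi) = c * L phi) \<and>
                 (\<forall>phi. phi \<notin> dV_space \<longrightarrow> L phi = 0)}"

definition d_dual :: "(('n::finite cvec \<Rightarrow> complex) \<Rightarrow> complex) set" where
  "d_dual = {T. (\<forall>f\<in>dual_space. \<forall>g\<in>dual_space. T (fadd f g) = T f + T g) \<and>
                (\<forall>c. \<forall>f\<in>dual_space. T (fsc c f) = cnj c * T f) \<and>
                (\<forall>f. f \<notin> dual_space \<longrightarrow> T f = 0)}"

definition hmap :: "('n::finite cvec \<Rightarrow> 'n cvec \<Rightarrow> complex) \<Rightarrow> 'n cvec \<Rightarrow> 'n cvec \<Rightarrow> complex" where
  "hmap B v = (\<lambda>w. B v w)"

definition hstar :: "('n::finite cvec \<Rightarrow> 'n cvec \<Rightarrow> complex) \<Rightarrow> (('n cvec \<Rightarrow> complex) \<Rightarrow> complex) \<Rightarrow> 'n cvec \<Rightarrow> complex" where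
  "hstar B L = (\<lambda>v. L (hmap B v))"

definition hstar_inv :: "('n::finite cvec \<Rightarrow> 'n cvec \<Rightarrow> complex) \<Rightarrow> ('n cvec \<Rightarrow> complex) \<Rightarrow> ('n cvec \<Rightarrow> complex) \<Rightarrow> complex" where
  "hstar_inv B f = (THE L. L \<in> dual_dV \<and> hstar B L = f)"

text \<open>d(V^*) is a dual of dV: its evaluation d(V^*) (x) dV -> 1 is obtained from
  coev_V : 1 -> V (x) V^*, by applying d and chi (giving dV (x) d(V^*) -> d(1) = 1)
  and precomposing with the Koszul braiding.  For an element bar g of dV
  (g in V^*, the antilinear representative being phi = conj o g) of parity q and
  an element bar alpha of d(V^*) of parity p, the composite d(coev_V) o chi gives
  sum_i (-1)^(|alpha||e_i|) conj(g(e_i) alpha(e^i)), i.e.  (-1)^(pq) Theta_p(g_q)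
  with Theta the representative of bar alpha; the braiding contributes (-1)^(qp).\<close>
definition dcoev_chi :: "'n::finite cvec set \<Rightarrow> 'n cvec set \<Rightarrow> nat \<Rightarrow> nat \<Rightarrow> ('n cvec \<Rightarrow> complex) \<Rightarrow> (('n cvec \<Rightarrow> complex) \<Rightarrow> complex) \<Rightarrow> complex" where
  "dcoev_chi V0 V1 q p phi T = koszul p q * T (\<lambda>v. cnj (phi (parproj V0 V1 q (parproj V0 V1 p v))))"

definition ev_ddual :: "'n::finite cvec set \<Rightarrow> 'n cvec set \<Rightarrow> (('n cvec \<Rightarrow> complex) \<Rightarrow> complex) \<Rightarrow> ('n cvec \<Rightarrow> complex) \<Rightarrow> complex" where
  "ev_ddual V0 V1 T phi = (\<Sum>p\<in>{0::nat,1}. \<Sum>q\<in>{0::nat,1}. koszul q p * dcoev_chi V0 V1 q p phi T)"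

text \<open>Canonical uniqueness-of-duals isomorphism (dV)^* -> d(V^*): the unique map
  intertwining the standard evaluation of (dV)^* with the evaluation of d(V^*).\<close>
definition psi_can :: "'n::finite cvec set \<Rightarrow> 'n cvec set \<Rightarrow> (('n cvec \<Rightarrow> complex) \<Rightarrow> complex) \<Rightarrow> ('n cvec \<Rightarrow> complex) \<Rightarrow> complex" where
  "psi_can V0 V1 L = (THE T. T \<in> d_dual \<and> (\<forall>phi\<in>dV_space. ev_ddual V0 V1 T phi = L phi))"

text \<open>The dual Hermitian pairing on V^*:  V^* --(h^*)^{-1}--> (dV)^* --psi--> d(V^*),
  read off as <f, f'> = (psi ((h^*)^{-1} f)) (bar f').\<close>
definition dual_form :: "'n::finite cvec set \<Rightarrow> 'n cvec set \<Rightarrow> ('n cvec \<Rightarrow> 'n cvec \<Rightarrow> complex) \<Rightarrow> ('n cvec \<Rightarrow> complex) \<Rightarrow> ('n cvec \<Rightarrow> complex) \<Rightarrow> complex" where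
  "dual_form V0 V1 B f f' = psi_can V0 V1 (hstar_inv B f) f'"

end

theory Submission
  imports Defs
begin

(* Since B is nondegenerate and V is finite-dimensional, every f in V^* has a unique Riesz
   vector w_f with B w_f x = conj (f x); the map f |-> w_f is an antilinear bijection from V^*
   onto V, and it sends even functionals into V0 and odd ones into V1, because V0 and V1 are
   each other's B-orthogonal complements.  Unwinding the inverse of h^* and the canonical
   isomorphism from (dV)^* to the conjugate dual of V^*, whose two Koszul signs cancel, the
   dual pairing is <f, f'> = f (w_f') = conj (B w_f w_f').
   Conjugation keeps B v v > 0 on the even part, but turns B v v = i r (r > 0) on the odd part
   into -i r: the odd part of the dual is negative definite. *)

lemma clin_fadd: "clin f \<Longrightarrow> clin g \<Longrightarrow> clin (fadd f g)"
  unfolding clin_def fadd_def by (simp add: algebra_simps)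

lemma clin_fsc: "clin f \<Longrightarrow> clin (fsc c f)"
  unfolding clin_def fsc_def by (simp add: algebra_simps)

lemma clin_fzero: "clin fzero"
  unfolding clin_def fzero_def by simp

lemma clin_zero: "clin f \<Longrightarrow> f 0 = 0"
  unfolding clin_def by (metis add_cancel_right_right)

lemma antilin_fadd: "antilin f \<Longrightarrow> antilin g \<Longrightarrow> antilin (fadd f g)"
  unfolding antilin_def fadd_def by (simp add: algebra_simps)

lemma antilin_fsc: "antilin f \<Longrightarrow> antilin (fsc c f)"
  unfolding antilin_def fsc_def by (simp add: algebra_simps)

lemma clin_cnj: "clin f \<Longrightarrow> antilin (\<lambda>x. cnj (f x))"
  unfolding clin_def antilin_def by simp

lemma antilin_cnj: "antilin f \<Longrightarrow> clin (\<lambda>x. cnj (f x))"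
  unfolding clin_def antilin_def by simp

lemma antilin_zero: "antilin f \<Longrightarrow> f 0 = 0"
  using clin_zero[OF antilin_cnj] by simp

lemma antilin_sum:
  assumes "antilin f" "finite S"
  shows "f (\<Sum>i\<in>S. g i) = (\<Sum>i\<in>S. f (g i))"
  using assms(2) by induction (use assms(1) antilin_zero in \<open>simp_all add: antilin_def\<close>)

lemma antilin_basis_expansion:
  assumes "antilin f"
  shows "f w = (\<Sum>i\<in>UNIV. cnj (w $ i) * f (axis i 1))"
proof -
  have "f w = f (\<Sum>i\<in>UNIV. (w $ i) *s axis i 1)"
    by (simp add: basis_expansion)
  also have "\<dots> = (\<Sum>i\<in>UNIV. cnj (w $ i) * f (axis i 1))"
    using assms by (simp add: antilin_sum antilin_def)
  finally show ?thesis .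
qed

lemma antilin_eqI:
  assumes "antilin f" "antilin g" "\<And>i. f (axis i 1) = g (axis i 1)"
  shows "f = g"
proof
  fix w
  show "f w = g w"
    by (subst (1 2) antilin_basis_expansion) (use assms in simp_all)
qed

lemma is_subsp_iff_subspace: "is_subsp UNIV (+) (\<lambda>c x. c *s x) 0 W \<longleftrightarrow> vec.subspace W"
  by (simp add: is_subsp_def vec.subspace_def)

lemma pos_real_cnj: "pos_real z \<Longrightarrow> pos_real (cnj z)"
  by (simp add: pos_real_def Reals_cnj_iff)

lemma neg_real_cnj_div_imaginary_unit:
  assumes "pos_real (z / \<i>)"
  shows "neg_real (cnj z / \<i>)"
proof -
  have "cnj z / \<i> = - cnj (z / \<i>)"
    by simp
  also have "\<dots> = - (z / \<i>)"
    using assms by (simp add: pos_real_def Reals_cnj_iff)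
  finally show ?thesis
    using assms by (simp add: pos_real_def neg_real_def)
qed

section \<open>Even and odd parts\<close>

locale graded_cvec =
  fixes V0 V1 :: "'n::finite cvec set"
  assumes subspace_even: "vec.subspace V0"
    and subspace_odd: "vec.subspace V1"
    and even_inter_odd: "V0 \<inter> V1 = {0}"
    and even_plus_odd: "\<exists>a\<in>V0. \<exists>b\<in>V1. x = a + b"
begin

abbreviation even_part :: "'n cvec \<Rightarrow> 'n cvec" where
  "even_part \<equiv> parproj V0 V1 0"

\<comment> \<open>parity index \<open>Suc 0\<close> rather than \<open>1\<close>: that is the form the simplifier produces\<close>
abbreviation odd_part :: "'n cvec \<Rightarrow> 'n cvec" where
  "odd_part \<equiv> parproj V0 V1 (Suc 0)"

lemma decomposition_unique:
  assumes "a \<in> V0" "b \<in> V1" "a' \<in> V0" "b' \<in> V1" "a + b = a' + b'"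
  shows "a = a'" "b = b'"
proof -
  have "a - a' = b' - b"
    using assms(5) by (simp add: algebra_simps)
  moreover have "a - a' \<in> V0" "b' - b \<in> V1"
    using assms(1-4) subspace_even subspace_odd by (simp_all add: vec.subspace_diff)
  ultimately have "a - a' \<in> V0 \<inter> V1" "b' - b \<in> V0 \<inter> V1"
    by simp_all
  then show "a = a'" "b = b'"
    using even_inter_odd by auto
qed

lemma even_part_eq:
  assumes "a \<in> V0" "b \<in> V1"
  shows "even_part (a + b) = a"
proof -
  have "(THE a'. a' \<in> V0 \<and> a + b - a' \<in> V1) = a"
  proof (rule the_equality)
    fix a' assume "a' \<in> V0 \<and> a + b - a' \<in> V1"
    then show "a' = a"
      using decomposition_unique(1)[of a' "a + b - a'" a b] assms by simp
  qed (use assms in simp)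
  then show ?thesis
    by (simp add: parproj_def)
qed

lemma odd_part_eq:
  assumes "a \<in> V0" "b \<in> V1"
  shows "odd_part (a + b) = b"
proof -
  have "(THE b'. b' \<in> V1 \<and> a + b - b' \<in> V0) = b"
  proof (rule the_equality)
    fix b' assume "b' \<in> V1 \<and> a + b - b' \<in> V0"
    then show "b' = b"
      using decomposition_unique(2)[of "a + b - b'" b' a b] assms by simp
  qed (use assms in simp)
  then show ?thesis
    by (simp add: parproj_def)
qed

lemma even_part_mem: "even_part v \<in> V0"
  and odd_part_mem: "odd_part v \<in> V1"
  and even_plus_odd_part: "even_part v + odd_part v = v"
proof -
  obtain a b where "a \<in> V0" "b \<in> V1" "v = a + b"
    using even_plus_odd by blast
  then show "even_part v \<in> V0" "odd_part v \<in> V1" "even_part v + odd_part v = v"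
    by (simp_all add: even_part_eq odd_part_eq)
qed

lemma even_part_even: "a \<in> V0 \<Longrightarrow> even_part a = a"
  and odd_part_even: "a \<in> V0 \<Longrightarrow> odd_part a = 0"
  and even_part_odd: "b \<in> V1 \<Longrightarrow> even_part b = 0"
  and odd_part_odd: "b \<in> V1 \<Longrightarrow> odd_part b = b"
  using even_part_eq[of a 0] odd_part_eq[of a 0] even_part_eq[of 0 b] odd_part_eq[of 0 b]
    subspace_even subspace_odd by (simp_all add: vec.subspace_0)

lemma even_part_add: "even_part (x + y) = even_part x + even_part y"
  and odd_part_add: "odd_part (x + y) = odd_part x + odd_part y"
proof -
  have "(even_part x + even_part y) + (odd_part x + odd_part y)
      = (even_part x + odd_part x) + (even_part y + odd_part y)"
    by (simp add: algebra_simps)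
  then have "x + y = (even_part x + even_part y) + (odd_part x + odd_part y)"
    by (simp add: even_plus_odd_part)
  moreover have "even_part x + even_part y \<in> V0" "odd_part x + odd_part y \<in> V1"
    using subspace_even subspace_odd even_part_mem odd_part_mem by (simp_all add: vec.subspace_add)
  ultimately show "even_part (x + y) = even_part x + even_part y"
    "odd_part (x + y) = odd_part x + odd_part y"
    by (simp_all add: even_part_eq odd_part_eq)
qed

lemma even_part_scale: "even_part (c *s x) = c *s even_part x"
  and odd_part_scale: "odd_part (c *s x) = c *s odd_part x"
proof -
  have "c *s x = c *s even_part x + c *s odd_part x"
    by (simp flip: vector_add_ldistrib add: even_plus_odd_part)
  moreover have "c *s even_part x \<in> V0" "c *s odd_part x \<in> V1"
    using subspace_even subspace_odd even_part_mem odd_part_mem by (simp_all add: vec.subspace_scale)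
  ultimately show "even_part (c *s x) = c *s even_part x" "odd_part (c *s x) = c *s odd_part x"
    by (simp_all add: even_part_eq odd_part_eq)
qed

end

section \<open>The graded dual and its conjugate\<close>

lemma d_dual_fzero:
  assumes "T \<in> d_dual"
  shows "T fzero = 0"
proof -
  have "T (fadd fzero fzero) = T fzero + T fzero"
    using assms clin_fzero unfolding d_dual_def dual_space_def by blast
  moreover have "fadd fzero fzero = (fzero :: 'n::finite cvec \<Rightarrow> complex)"
    by (simp add: fadd_def fzero_def)
  ultimately show ?thesis
    by (metis add_cancel_right_right)
qed

definition conj_dual_iso :: "(('n::finite cvec \<Rightarrow> complex) \<Rightarrow> complex) \<Rightarrow> ('n cvec \<Rightarrow> complex) \<Rightarrow> complex" where
  "conj_dual_iso L = (\<lambda>g. if g \<in> dual_space then L (\<lambda>v. cnj (g v)) else 0)"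

lemma conj_dual_iso_mem:
  fixes L :: "('n::finite cvec \<Rightarrow> complex) \<Rightarrow> complex"
  assumes L: "L \<in> dual_dV"
  shows "conj_dual_iso L \<in> d_dual"
  unfolding d_dual_def
proof (intro CollectI conjI ballI allI impI)
  fix f g :: "'n::finite cvec \<Rightarrow> complex" assume "f \<in> dual_space" "g \<in> dual_space"
  moreover have "(\<lambda>v. cnj (fadd f g v)) = fadd (\<lambda>v. cnj (f v)) (\<lambda>v. cnj (g v))"
    by (simp add: fadd_def)
  ultimately show "conj_dual_iso L (fadd f g) = conj_dual_iso L f + conj_dual_iso L g"
    using L by (simp add: conj_dual_iso_def dual_space_def dual_dV_def dV_space_def clin_fadd clin_cnj)
next
  fix c and f :: "'n::finite cvec \<Rightarrow> complex" assume "f \<in> dual_space"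
  moreover have "(\<lambda>v. cnj (fsc c f v)) = fsc (cnj c) (\<lambda>v. cnj (f v))"
    by (simp add: fsc_def)
  ultimately show "conj_dual_iso L (fsc c f) = cnj c * conj_dual_iso L f"
    using L by (simp add: conj_dual_iso_def dual_space_def dual_dV_def dV_space_def clin_fsc clin_cnj)
qed (simp add: conj_dual_iso_def)

lemma is_subsp_dual_even: "is_subsp dual_space fadd fsc fzero (dual_even V0 V1)"
  by (auto simp: is_subsp_def dual_even_def dual_space_def clin_def fadd_def fsc_def fzero_def
      algebra_simps)

lemma is_subsp_dual_odd: "is_subsp dual_space fadd fsc fzero (dual_odd V0 V1)"
  by (auto simp: is_subsp_def dual_odd_def dual_space_def clin_def fadd_def fsc_def fzero_def
      algebra_simps)

context graded_cvec
begin

lemma clin_comp_even_part: "clin f \<Longrightarrow> clin (\<lambda>v. f (even_part v))"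
  and clin_comp_odd_part: "clin f \<Longrightarrow> clin (\<lambda>v. f (odd_part v))"
  by (simp_all add: clin_def even_part_add even_part_scale odd_part_add odd_part_scale)

lemma clin_even_plus_odd_part: "clin f \<Longrightarrow> f (even_part v) + f (odd_part v) = f v"
  unfolding clin_def by (metis even_plus_odd_part)

lemma ev_ddual_eq:
  assumes T: "T \<in> d_dual" and phi: "antilin phi"
  shows "ev_ddual V0 V1 T phi = T (\<lambda>v. cnj (phi v))"
proof -
  let ?g0 = "\<lambda>v. cnj (phi (even_part v))" and ?g1 = "\<lambda>v. cnj (phi (odd_part v))"
  have "?g0 \<in> dual_space" "?g1 \<in> dual_space"
    using clin_comp_even_part[OF antilin_cnj[OF phi]] clin_comp_odd_part[OF antilin_cnj[OF phi]]
    by (simp_all add: dual_space_def)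
  then have "T (fadd ?g0 ?g1) = T ?g0 + T ?g1"
    using T by (simp add: d_dual_def)
  moreover have "fadd ?g0 ?g1 = (\<lambda>v. cnj (phi v))"
    using clin_even_plus_odd_part[OF antilin_cnj[OF phi]] by (simp add: fadd_def)
  moreover have "T (\<lambda>v. cnj (phi 0)) = 0"
    using d_dual_fzero[OF T] antilin_zero[OF phi] by (simp add: fzero_def)
  ultimately show ?thesis
    \<comment> \<open>the two Koszul signs cancel, and the mixed-parity terms vanish\<close>
    by (simp add: ev_ddual_def dcoev_chi_def koszul_def even_part_mem odd_part_mem
        even_part_even odd_part_even even_part_odd odd_part_odd)
qed

lemma psi_can_eq:
  assumes "L \<in> dual_dV"
  shows "psi_can V0 V1 L = conj_dual_iso L"
  unfolding psi_can_def
proof (rule the_equality)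
  show "conj_dual_iso L \<in> d_dual \<and> (\<forall>phi\<in>dV_space. ev_ddual V0 V1 (conj_dual_iso L) phi = L phi)"
    using conj_dual_iso_mem[OF assms]
    by (simp add: ev_ddual_eq dV_space_def conj_dual_iso_def dual_space_def antilin_cnj)
next
  fix T assume T: "T \<in> d_dual \<and> (\<forall>phi\<in>dV_space. ev_ddual V0 V1 T phi = L phi)"
  show "T = conj_dual_iso L"
  proof
    fix g
    show "T g = conj_dual_iso L g"
      using T ev_ddual_eq[of T "\<lambda>v. cnj (g v)"]
      by (cases "g \<in> dual_space") (auto simp: conj_dual_iso_def d_dual_def dV_space_def dual_space_def clin_cnj)
  qed
qed

lemma dual_even_inter_odd: "dual_even V0 V1 \<inter> dual_odd V0 V1 = {fzero}"
proof
  show "{fzero} \<subseteq> dual_even V0 V1 \<inter> dual_odd V0 V1"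
    using is_subsp_dual_even[of V0 V1] is_subsp_dual_odd[of V0 V1] by (simp add: is_subsp_def)
  show "dual_even V0 V1 \<inter> dual_odd V0 V1 \<subseteq> {fzero}"
  proof
    fix f assume "f \<in> dual_even V0 V1 \<inter> dual_odd V0 V1"
    then have "f v = 0" for v
      using clin_even_plus_odd_part[of f v] even_part_mem odd_part_mem
      by (simp add: dual_even_def dual_odd_def dual_space_def)
    then show "f \<in> {fzero}"
      by (auto simp: fzero_def)
  qed
qed

lemma dual_even_plus_odd:
  assumes "f \<in> dual_space"
  shows "\<exists>a\<in>dual_even V0 V1. \<exists>b\<in>dual_odd V0 V1. f = fadd a b"
proof (intro bexI)
  have "clin f"
    using assms by (simp add: dual_space_def)
  then show "(\<lambda>v. f (even_part v)) \<in> dual_even V0 V1" "(\<lambda>v. f (odd_part v)) \<in> dual_odd V0 V1"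
      "f = fadd (\<lambda>v. f (even_part v)) (\<lambda>v. f (odd_part v))"
    by (auto simp: dual_even_def dual_odd_def dual_space_def fadd_def clin_comp_even_part
        clin_comp_odd_part even_part_odd odd_part_even clin_zero clin_even_plus_odd_part)
qed

end

section \<open>Riesz representation\<close>

locale nondegenerate_sesquilinear =
  fixes B :: "'n::finite cvec \<Rightarrow> 'n cvec \<Rightarrow> complex"
  assumes add_left: "B (x + y) w = B x w + B y w"
    and add_right: "B w (x + y) = B w x + B w y"
    and scale_left: "B (c *s x) w = c * B x w"
    and scale_right: "B w (c *s x) = cnj c * B w x"
    and nondegenerate: "(\<And>y. B x y = 0) \<Longrightarrow> x = 0"
begin

lemma zero_left: "B 0 w = 0"
  using scale_left[of 0] by simp

lemma antilin_B: "antilin (B v)"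
  unfolding antilin_def using add_right scale_right by blast

lemma inj_B: "inj B"
proof (rule injI)
  fix v v' assume "B v = B v'"
  then have "B (v + (-1) *s v') y = 0" for y
    by (simp only: add_left scale_left) simp
  then show "v = v'"
    using nondegenerate[of "v + (-1) *s v'"] by simp
qed

lemma antilin_represented:
  assumes "antilin phi"
  shows "\<exists>v. B v = phi"
proof -
  define A where "A v = (\<chi> i. B v (axis i 1))" for v
  have "Vector_Spaces.linear (*s) (*s) A"
    by (simp add: A_def Vector_Spaces.linear_def module_hom_iff vec.module_axioms
        vec.vector_space_axioms vec_eq_iff add_left scale_left)
  moreover have "inj A"
  proof (rule injI)
    fix v v' assume "A v = A v'"
    then have "B v = B v'"
      by (intro antilin_eqI antilin_B) (simp add: A_def vec_eq_iff)
    then show "v = v'"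
      using inj_B by (simp add: inj_eq)
  qed
  ultimately obtain v where "A v = (\<chi> i. phi (axis i 1))"
    using vec.linear_inj_imp_surj by (metis surjD)
  then have "B v = phi"
    by (intro antilin_eqI antilin_B assms) (simp add: A_def vec_eq_iff)
  then show ?thesis ..
qed

definition riesz :: "('n cvec \<Rightarrow> complex) \<Rightarrow> 'n cvec" where
  "riesz phi = (THE v. B v = phi)"

lemma riesz_eqI: "B v = phi \<Longrightarrow> riesz phi = v"
  unfolding riesz_def by (rule the_equality) (use inj_B in \<open>auto simp: inj_eq\<close>)

lemma B_riesz: "antilin phi \<Longrightarrow> B (riesz phi) = phi"
  using antilin_represented riesz_eqI by blast

lemma riesz_B: "riesz (B v) = v"
  by (rule riesz_eqI) (rule refl)

lemma riesz_fadd: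
  assumes "antilin phi" "antilin psi"
  shows "riesz (fadd phi psi) = riesz phi + riesz psi"
  by (rule riesz_eqI) (simp add: fun_eq_iff add_left B_riesz assms fadd_def)

lemma riesz_fsc:
  assumes "antilin phi"
  shows "riesz (fsc c phi) = c *s riesz phi"
  by (rule riesz_eqI) (simp add: fun_eq_iff scale_left B_riesz assms fsc_def)

definition riesz_transpose :: "('n cvec \<Rightarrow> complex) \<Rightarrow> ('n cvec \<Rightarrow> complex) \<Rightarrow> complex" where
  "riesz_transpose f = (\<lambda>phi. if phi \<in> dV_space then f (riesz phi) else 0)"

lemma riesz_transpose_mem: "clin f \<Longrightarrow> riesz_transpose f \<in> dual_dV"
  by (simp add: dual_dV_def riesz_transpose_def dV_space_def antilin_fadd antilin_fsc
      riesz_fadd riesz_fsc clin_def)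

lemma hstar_riesz_transpose: "hstar B (riesz_transpose f) = f"
  by (simp add: fun_eq_iff hstar_def hmap_def riesz_transpose_def dV_space_def antilin_B
      riesz_B[unfolded fun_eq_iff] flip: fun_eq_iff)

lemma hstar_inv_eq:
  assumes "clin f"
  shows "hstar_inv B f = riesz_transpose f"
  unfolding hstar_inv_def
proof (rule the_equality)
  show "riesz_transpose f \<in> dual_dV \<and> hstar B (riesz_transpose f) = f"
    using riesz_transpose_mem[OF assms] hstar_riesz_transpose by simp
next
  fix L assume L: "L \<in> dual_dV \<and> hstar B L = f"
  show "L = riesz_transpose f"
  proof
    fix phi
    show "L phi = riesz_transpose f phi"
    proof (cases "phi \<in> dV_space")
      case True
      then have "L phi = hstar B L (riesz phi)"
        by (simp add: hstar_def hmap_def dV_space_def B_riesz flip: fun_eq_iff)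
      then show ?thesis
        using L True by (simp add: riesz_transpose_def)
    next
      case False
      then show ?thesis
        using L by (simp add: dual_dV_def riesz_transpose_def)
    qed
  qed
qed

definition dual_vec :: "('n cvec \<Rightarrow> complex) \<Rightarrow> 'n cvec" where
  "dual_vec f = riesz (\<lambda>x. cnj (f x))"

lemma B_dual_vec: "clin f \<Longrightarrow> B (dual_vec f) x = cnj (f x)"
  by (simp add: dual_vec_def B_riesz clin_cnj)

lemma dual_vec_fadd: "clin f \<Longrightarrow> clin g \<Longrightarrow> dual_vec (fadd f g) = dual_vec f + dual_vec g"
  unfolding dual_vec_def by (rule riesz_eqI) (simp add: fun_eq_iff add_left B_riesz clin_cnj fadd_def)

lemma dual_vec_fsc: "clin f \<Longrightarrow> dual_vec (fsc c f) = cnj c *s dual_vec f"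
  unfolding dual_vec_def by (rule riesz_eqI) (simp add: fun_eq_iff scale_left B_riesz clin_cnj fsc_def)

lemma dual_vec_surj: "\<exists>f. clin f \<and> dual_vec f = v"
proof (intro exI conjI)
  show "clin (\<lambda>x. cnj (B v x))"
    using antilin_cnj[OF antilin_B] .
  show "dual_vec (\<lambda>x. cnj (B v x)) = v"
    unfolding dual_vec_def by (rule riesz_eqI) simp
qed

lemma dual_vec_eq_0_iff:
  assumes "clin f"
  shows "dual_vec f = 0 \<longleftrightarrow> f = fzero"
proof
  assume "dual_vec f = 0"
  then have "cnj (f x) = 0" for x
    using B_dual_vec[OF assms, of x] by (simp add: zero_left)
  then show "f = fzero"
    by (simp add: fun_eq_iff fzero_def)
next
  assume "f = fzero"
  then show "dual_vec f = 0"
    unfolding dual_vec_def by (intro riesz_eqI) (simp add: fun_eq_iff zero_left fzero_def)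
qed

lemma mem_summand_if_orthogonal:
  assumes span: "\<And>x. \<exists>a\<in>U. \<exists>b\<in>U'. x = a + b"
    and orth: "\<And>a b. a \<in> U \<Longrightarrow> b \<in> U' \<Longrightarrow> B a b = 0 \<and> B b a = 0"
    and w: "\<And>y. y \<in> U' \<Longrightarrow> B w y = 0"
  shows "w \<in> U"
proof -
  obtain a b where ab: "a \<in> U" "b \<in> U'" "w = a + b"
    using span by blast
  have "B b y = 0" for y
  proof -
    obtain c d where cd: "c \<in> U" "d \<in> U'" "y = c + d"
      using span by blast
    have "B b d = B w d - B a d"
      using ab(3) by (simp add: add_left)
    then show ?thesis
      using ab cd orth w by (simp add: add_right)
  qed
  then have "b = 0"
    by (rule nondegenerate)
  then show ?thesis
    using ab by simp
qed

end

section \<open>The dual pairing\<close>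

locale super_hermitian_cvec = graded_cvec V0 V1 + nondegenerate_sesquilinear B
  for V0 V1 :: "'n::finite cvec set" and B :: "'n cvec \<Rightarrow> 'n cvec \<Rightarrow> complex" +
  assumes orthogonal: "x \<in> V0 \<Longrightarrow> y \<in> V1 \<Longrightarrow> B x y = 0 \<and> B y x = 0"
    and hermitian_even: "x \<in> V0 \<Longrightarrow> y \<in> V0 \<Longrightarrow> B x y = cnj (B y x)"
    and skew_hermitian_odd: "x \<in> V1 \<Longrightarrow> y \<in> V1 \<Longrightarrow> B x y = - cnj (B y x)"

lemma super_hermitian_cvecI:
  assumes "super_herm UNIV (+) (\<lambda>c x. c *s x) 0 V0 V1 B"
  shows "super_hermitian_cvec V0 V1 B"
  using assms
  unfolding super_herm_def is_subsp_iff_subspace super_hermitian_cvec_def graded_cvec_def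
    nondegenerate_sesquilinear_def super_hermitian_cvec_axioms_def
  by blast

context super_hermitian_cvec
begin

lemma dual_form_eq_cnj:
  assumes "f \<in> dual_space" "f' \<in> dual_space"
  shows "dual_form V0 V1 B f f' = cnj (B (dual_vec f) (dual_vec f'))"
proof -
  have "dual_form V0 V1 B f f' = f (dual_vec f')"
    using assms riesz_transpose_mem
    by (simp add: dual_form_def hstar_inv_eq psi_can_eq conj_dual_iso_def riesz_transpose_def
        dual_vec_def dual_space_def dV_space_def clin_cnj)
  then show ?thesis
    using assms by (simp add: B_dual_vec dual_space_def)
qed

lemma dual_vec_even: "f \<in> dual_even V0 V1 \<Longrightarrow> dual_vec f \<in> V0"
  by (rule mem_summand_if_orthogonal[where U' = V1])
    (use even_plus_odd orthogonal in \<open>auto simp: dual_even_def dual_space_def B_dual_vec\<close>)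

lemma dual_vec_odd:
  assumes "f \<in> dual_odd V0 V1"
  shows "dual_vec f \<in> V1"
proof (rule mem_summand_if_orthogonal[where U' = V0])
  show "\<exists>b\<in>V1. \<exists>a\<in>V0. x = b + a" for x
    using even_plus_odd[of x] by (metis add.commute)
qed (use assms orthogonal in \<open>auto simp: dual_odd_def dual_space_def B_dual_vec\<close>)

lemma dual_form_add_left:
  "f \<in> dual_space \<Longrightarrow> g \<in> dual_space \<Longrightarrow> h \<in> dual_space \<Longrightarrow>
    dual_form V0 V1 B (fadd f g) h = dual_form V0 V1 B f h + dual_form V0 V1 B g h"
  by (simp add: dual_form_eq_cnj clin_fadd dual_vec_fadd add_left dual_space_def)

lemma dual_form_add_right:
  "f \<in> dual_space \<Longrightarrow> g \<in> dual_space \<Longrightarrow> h \<in> dual_space \<Longrightarrow>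
    dual_form V0 V1 B h (fadd f g) = dual_form V0 V1 B h f + dual_form V0 V1 B h g"
  by (simp add: dual_form_eq_cnj clin_fadd dual_vec_fadd add_right dual_space_def)

lemma dual_form_scale_left:
  "f \<in> dual_space \<Longrightarrow> h \<in> dual_space \<Longrightarrow> dual_form V0 V1 B (fsc c f) h = c * dual_form V0 V1 B f h"
  by (simp add: dual_form_eq_cnj clin_fsc dual_vec_fsc scale_left dual_space_def)

lemma dual_form_scale_right:
  "f \<in> dual_space \<Longrightarrow> h \<in> dual_space \<Longrightarrow> dual_form V0 V1 B h (fsc c f) = cnj c * dual_form V0 V1 B h f"
  by (simp add: dual_form_eq_cnj clin_fsc dual_vec_fsc scale_right dual_space_def)

lemma dual_form_orthogonal:
  assumes "f \<in> dual_even V0 V1" "g \<in> dual_odd V0 V1"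
  shows "dual_form V0 V1 B f g = 0 \<and> dual_form V0 V1 B g f = 0"
  using orthogonal[OF dual_vec_even[OF assms(1)] dual_vec_odd[OF assms(2)]] assms
  by (simp add: dual_form_eq_cnj dual_even_def dual_odd_def)

lemma dual_form_hermitian_even:
  assumes "f \<in> dual_even V0 V1" "g \<in> dual_even V0 V1"
  shows "dual_form V0 V1 B f g = cnj (dual_form V0 V1 B g f)"
  using hermitian_even[OF dual_vec_even[OF assms(1)] dual_vec_even[OF assms(2)]] assms
  by (simp add: dual_form_eq_cnj dual_even_def)

lemma dual_form_skew_hermitian_odd:
  assumes "f \<in> dual_odd V0 V1" "g \<in> dual_odd V0 V1"
  shows "dual_form V0 V1 B f g = - cnj (dual_form V0 V1 B g f)"
  using skew_hermitian_odd[OF dual_vec_odd[OF assms(1)] dual_vec_odd[OF assms(2)]] assms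
  by (simp add: dual_form_eq_cnj dual_odd_def)

lemma dual_form_nondegenerate:
  assumes f: "f \<in> dual_space" and null: "\<forall>g\<in>dual_space. dual_form V0 V1 B f g = 0"
  shows "f = fzero"
proof -
  have "B (dual_vec f) v = 0" for v
    using dual_vec_surj[of v] null f by (auto simp: dual_form_eq_cnj dual_space_def)
  then have "dual_vec f = 0"
    by (rule nondegenerate)
  then show ?thesis
    using f dual_vec_eq_0_iff by (simp add: dual_space_def)
qed

lemma dual_form_super_herm:
  "super_herm dual_space fadd fsc fzero (dual_even V0 V1) (dual_odd V0 V1) (dual_form V0 V1 B)"
  unfolding super_herm_def
  by (intro conjI ballI allI impI)
    (auto simp: is_subsp_dual_even is_subsp_dual_odd dual_even_inter_odd dual_even_plus_odd
      dual_form_add_left dual_form_add_right dual_form_scale_left dual_form_scale_right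
      dual_form_orthogonal
      intro: dual_form_hermitian_even dual_form_skew_hermitian_odd dual_form_nondegenerate)

lemma dual_form_even_pos:
  assumes pos: "\<And>v. v \<in> V0 \<Longrightarrow> v \<noteq> 0 \<Longrightarrow> pos_real (B v v)"
    and f: "f \<in> dual_even V0 V1" "f \<noteq> fzero"
  shows "pos_real (dual_form V0 V1 B f f)"
proof -
  have "dual_vec f \<noteq> 0"
    using f dual_vec_eq_0_iff by (simp add: dual_even_def dual_space_def)
  then have "pos_real (B (dual_vec f) (dual_vec f))"
    using pos dual_vec_even[OF f(1)] by blast
  then have "pos_real (cnj (B (dual_vec f) (dual_vec f)))"
    by (rule pos_real_cnj)
  then show ?thesis
    using f(1) by (simp add: dual_form_eq_cnj dual_even_def)
qed

lemma dual_form_odd_neg: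
  assumes pos: "\<And>v. v \<in> V1 \<Longrightarrow> v \<noteq> 0 \<Longrightarrow> pos_real (B v v / \<i>)"
    and f: "f \<in> dual_odd V0 V1" "f \<noteq> fzero"
  shows "neg_real (dual_form V0 V1 B f f / \<i>)"
proof -
  have "dual_vec f \<noteq> 0"
    using f dual_vec_eq_0_iff by (simp add: dual_odd_def dual_space_def)
  then have "pos_real (B (dual_vec f) (dual_vec f) / \<i>)"
    using pos dual_vec_odd[OF f(1)] by blast
  then have "neg_real (cnj (B (dual_vec f) (dual_vec f)) / \<i>)"
    by (rule neg_real_cnj_div_imaginary_unit)
  then show ?thesis
    using f(1) by (simp add: dual_form_eq_cnj dual_odd_def)
qed

end

theorem mainTheorem17:
  fixes V0 V1 :: "'n::finite cvec set" and B :: "'n cvec \<Rightarrow> 'n cvec \<Rightarrow> complex"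
  assumes "sHilbV V0 V1 B"
  shows "sHilb_oddneg_obj dual_space fadd fsc fzero (dual_even V0 V1) (dual_odd V0 V1) (dual_form V0 V1 B)"
proof -
  have herm: "super_herm UNIV (+) (\<lambda>c x. c *s x) 0 V0 V1 B"
    and pos_even: "\<forall>v\<in>V0. v \<noteq> 0 \<longrightarrow> pos_real (B v v)"
    and pos_odd: "\<forall>v\<in>V1. v \<noteq> 0 \<longrightarrow> pos_real (B v v / \<i>)"
    using assms by (simp_all add: sHilbV_def sHilb_obj_def)
  interpret super_hermitian_cvec V0 V1 B
    using herm by (rule super_hermitian_cvecI)
  show ?thesis
    unfolding sHilb_oddneg_obj_def
    using dual_form_super_herm dual_form_even_pos dual_form_odd_neg pos_even pos_odd by blast
qed

end
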